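(* The inclusion $K\colon\Delta_0\hookrightarrow\mathbf{Grph}$ is not a saturated class of arities: there exist $\Delta_0$-induced endofunctors of $\mathbf{Grph}$ whose composite is not $\Delta_0$-induced.
   Context: Here $\mathcal V=\mathbf{Set}$. $\mathbb G_1$ is the category freely generated by two parallel arrows $0\rightrightarrows 1$, and $\mathbf{Grph}=[\mathbb G_1^{\mathrm{op}},\mathbf{Set}]$ is the category of directed multigraphs. $\Delta_0$ is the (small, dense) full subcategory of $\mathbf{Grph}$ on the graphs $[n]=(0\to 1\to\cdots\to n)$ for $n\ge 0$. An endofunctor $G$ of $\mathbf{Grph}$ is $\Delta_0$-induced if it is the pointwise left Kan extension along $K$ of its restriction $GK$; $\Delta_0$ is a saturated class of arities if $\Delta_0$-induced endofunctors are closed under composition. *)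

theory Defs
  imports Main
begin

record ('v, 'e) graph =
  gV  :: "'v set"
  gE  :: "'e set"
  src :: "'e \<Rightarrow> 'v"
  tgt :: "'e \<Rightarrow> 'v"

definition wf_graph :: "('v, 'e) graph \<Rightarrow> bool" where
  "wf_graph G \<longleftrightarrow> (\<forall>e\<in>gE G. src G e \<in> gV G \<and> tgt G e \<in> gV G)"

type_synonym ('v, 'e, 'w, 'f) gmor = "('v \<Rightarrow> 'w) \<times> ('e \<Rightarrow> 'f)"

definition graph_hom :: "('v, 'e) graph \<Rightarrow> ('w, 'f) graph \<Rightarrow> ('v, 'e, 'w, 'f) gmor \<Rightarrow> bool" where
  "graph_hom G H h \<longleftrightarrow>
     (\<forall>v\<in>gV G. fst h v \<in> gV H) \<and>
     (\<forall>e\<in>gE G. snd h e \<in> gE H \<and> src H (snd h e) = fst h (src G e)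
                              \<and> tgt H (snd h e) = fst h (tgt G e))"

section \<open>The category Delta_0 of linear graphs [n] = (0 -> 1 -> ... -> n)\<close>

definition lin :: "nat \<Rightarrow> (nat, nat) graph" where
  "lin n = \<lparr>gV = {0..n}, gE = {0..<n}, src = (\<lambda>i. i), tgt = Suc\<rparr>"

text \<open>Graph maps [m] -> [n] are exactly the shifts i |-> i + k with k + m <= n.\<close>
definition sh :: "nat \<Rightarrow> (nat, nat, nat, nat) gmor" where
  "sh k = ((\<lambda>i. i + k), (\<lambda>i. i + k))"

text \<open>A functor Delta_0 -> Grph: object part, and morphism part indexed by (m, n, k)
  for the shift [m] -> [n] by k (meaningful when k + m <= n).\<close>
type_synonym ('v, 'e) d0fun =
  "(nat \<Rightarrow> ('v, 'e) graph) \<times> (nat \<Rightarrow> nat \<Rightarrow> nat \<Rightarrow> ('v, 'e, 'v, 'e) gmor)"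

definition d0_functor :: "('v, 'e) d0fun \<Rightarrow> bool" where
  "d0_functor F \<longleftrightarrow>
     (\<forall>n. wf_graph (fst F n)) \<and>
     (\<forall>m n k. k + m \<le> n \<longrightarrow> graph_hom (fst F m) (fst F n) (snd F m n k)) \<and>
     (\<forall>n. (\<forall>v\<in>gV (fst F n). fst (snd F n n 0) v = v) \<and>
          (\<forall>e\<in>gE (fst F n). snd (snd F n n 0) e = e)) \<and>
     (\<forall>m n p k j. k + m \<le> n \<longrightarrow> j + n \<le> p \<longrightarrow>
        (\<forall>v\<in>gV (fst F m). fst (snd F n p j) (fst (snd F m n k) v) = fst (snd F m p (k + j)) v) \<and>
        (\<forall>e\<in>gE (fst F m). snd (snd F n p j) (snd (snd F m n k) e) = snd (snd F m p (k + j)) e))"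

section \<open>Maps [n] -> X (paths of length n in X)\<close>

type_synonym ('x, 'y) path = "'x list \<times> 'y list"

definition plen :: "('x, 'y) path \<Rightarrow> nat" where
  "plen p = length (snd p)"

definition is_path :: "('x, 'y) graph \<Rightarrow> ('x, 'y) path \<Rightarrow> bool" where
  "is_path X p \<longleftrightarrow>
     length (fst p) = Suc (length (snd p)) \<and> set (fst p) \<subseteq> gV X \<and>
     (\<forall>i<length (snd p). snd p ! i \<in> gE X \<and> src X (snd p ! i) = fst p ! i
                          \<and> tgt X (snd p ! i) = fst p ! Suc i)"

text \<open>Precomposition of a path [n] -> X with the shift [m] -> [n] by k.\<close>
definition subpath :: "nat \<Rightarrow> nat \<Rightarrow> ('x, 'y) path \<Rightarrow> ('x, 'y) path" where
  "subpath k m p = (take (Suc m) (drop k (fst p)), take m (drop k (snd p)))"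

definition pmap :: "('x, 'y, 'a, 'b) gmor \<Rightarrow> ('x, 'y) path \<Rightarrow> ('a, 'b) path" where
  "pmap h p = (map (fst h) (fst p), map (snd h) (snd p))"

definition path_mor :: "('x, 'y) path \<Rightarrow> (nat, nat, 'x, 'y) gmor" where
  "path_mor p = ((\<lambda>i. fst p ! i), (\<lambda>i. snd p ! i))"

section \<open>Pointwise left Kan extension along K, via the colimit formula
  (Lan_K F)(X) = colim_{([n] -> X) in K/X} F[n], computed pointwise on vertices and edges\<close>

definition lanV_el :: "('v, 'e) d0fun \<Rightarrow> ('x, 'y) graph \<Rightarrow> (('x, 'y) path \<times> 'v) set" where
  "lanV_el F X = {(p, v). is_path X p \<and> v \<in> gV (fst F (plen p))}"

definition lanE_el :: "('v, 'e) d0fun \<Rightarrow> ('x, 'y) graph \<Rightarrow> (('x, 'y) path \<times> 'e) set" where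
  "lanE_el F X = {(p, e). is_path X p \<and> e \<in> gE (fst F (plen p))}"

definition lanV_gen :: "('v, 'e) d0fun \<Rightarrow> ('x, 'y) graph \<Rightarrow> ((('x, 'y) path \<times> 'v) \<times> (('x, 'y) path \<times> 'v)) set" where
  "lanV_gen F X = {((subpath k m p, v), (p, fst (snd F m (plen p) k) v)) | p k m v.
                     is_path X p \<and> k + m \<le> plen p \<and> v \<in> gV (fst F m)}"

definition lanE_gen :: "('v, 'e) d0fun \<Rightarrow> ('x, 'y) graph \<Rightarrow> ((('x, 'y) path \<times> 'e) \<times> (('x, 'y) path \<times> 'e)) set" where
  "lanE_gen F X = {((subpath k m p, e), (p, snd (snd F m (plen p) k) e)) | p k m e.
                     is_path X p \<and> k + m \<le> plen p \<and> e \<in> gE (fst F m)}"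

definition lanV_rel :: "('v, 'e) d0fun \<Rightarrow> ('x, 'y) graph \<Rightarrow> ((('x, 'y) path \<times> 'v) \<times> (('x, 'y) path \<times> 'v)) set" where
  "lanV_rel F X = (lanV_gen F X \<union> (lanV_gen F X)\<inverse>)\<^sup>* \<inter> (lanV_el F X \<times> lanV_el F X)"

definition lanE_rel :: "('v, 'e) d0fun \<Rightarrow> ('x, 'y) graph \<Rightarrow> ((('x, 'y) path \<times> 'e) \<times> (('x, 'y) path \<times> 'e)) set" where
  "lanE_rel F X = (lanE_gen F X \<union> (lanE_gen F X)\<inverse>)\<^sup>* \<inter> (lanE_el F X \<times> lanE_el F X)"

definition rep :: "'a set \<Rightarrow> 'a" where
  "rep c = (SOME x. x \<in> c)"

definition lan_obj :: "('v, 'e) d0fun \<Rightarrow> ('x, 'y) graph \<Rightarrow>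
    ((('x, 'y) path \<times> 'v) set, (('x, 'y) path \<times> 'e) set) graph" where
  "lan_obj F X =
     \<lparr>gV = lanV_el F X // lanV_rel F X,
      gE = lanE_el F X // lanE_rel F X,
      src = (\<lambda>c. lanV_rel F X `` {(fst (rep c), src (fst F (plen (fst (rep c)))) (snd (rep c)))}),
      tgt = (\<lambda>c. lanV_rel F X `` {(fst (rep c), tgt (fst F (plen (fst (rep c)))) (snd (rep c)))})\<rparr>"

text \<open>Action of Lan_K F on a graph map h : X -> Y (only the codomain Y is needed).\<close>
definition lan_mor :: "('v, 'e) d0fun \<Rightarrow> ('a, 'b) graph \<Rightarrow> ('x, 'y, 'a, 'b) gmor \<Rightarrow>
    ((('x, 'y) path \<times> 'v) set, (('x, 'y) path \<times> 'e) set,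
     (('a, 'b) path \<times> 'v) set, (('a, 'b) path \<times> 'e) set) gmor" where
  "lan_mor F Y h =
     ((\<lambda>c. lanV_rel F Y `` {(pmap h (fst (rep c)), snd (rep c))}),
      (\<lambda>c. lanE_rel F Y `` {(pmap h (fst (rep c)), snd (rep c))}))"

section \<open>The composite G = Lan_K F2 o Lan_K F1 and its restriction G K\<close>

definition comp_mor where
  "comp_mor F2 F1 Y h = lan_mor F2 (lan_obj F1 Y) (lan_mor F1 Y h)"

definition comp_res where
  "comp_res F2 F1 =
     ((\<lambda>n. lan_obj F2 (lan_obj F1 (lin n))),
      (\<lambda>m n k. comp_mor F2 F1 (lin n) (sh k)))"

text \<open>Canonical comparison map (Lan_K (G K))(X) -> G(X), sending the class of
  (p : [n] -> X, w in G[n]) to G(p)(w).\<close>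
definition comparison where
  "comparison F2 F1 X =
     ((\<lambda>c. fst (comp_mor F2 F1 X (path_mor (fst (rep c)))) (snd (rep c))),
      (\<lambda>c. snd (comp_mor F2 F1 X (path_mor (fst (rep c)))) (snd (rep c))))"

text \<open>G is Delta_0-induced at X: the canonical comparison is an isomorphism of graphs.\<close>
definition comp_induced_at where
  "comp_induced_at F2 F1 X \<longleftrightarrow>
     bij_betw (fst (comparison F2 F1 X)) (gV (lan_obj (comp_res F2 F1) X)) (gV (lan_obj F2 (lan_obj F1 X))) \<and>
     bij_betw (snd (comparison F2 F1 X)) (gE (lan_obj (comp_res F2 F1) X)) (gE (lan_obj F2 (lan_obj F1 X)))"

end

theory Submission
  imports Defs
begin

text \<open>Lan_K F2 has an edge over Y exactly when Y contains a path of length at least 12.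
  The functor F1 is built so that a height function rises by one along every edge of F1[m];
  this bounds the paths of (Lan_K F1)[n] by 3n + 4. Hence the restriction G K of
  G = Lan_K F2 \<circ> Lan_K F1 has no edges on [0], [1], [2], and Lan_K (G K) has no edges over the
  transitive triangle, all of whose paths have length at most 2. Over the triangle, however,
  the three copies of F1[1] glue into a directed 3-cycle, so (Lan_K F1)(triangle) has paths of
  every length and G(triangle) has an edge.\<close>

lemma equiv_symcl_restrict: "equiv A ((R \<union> R\<inverse>)\<^sup>* \<inter> A \<times> A)"
proof -
  have "sym ((R \<union> R\<inverse>)\<^sup>*)"
    by (rule sym_rtrancl[OF sym_Un_converse])
  then show ?thesis
    unfolding equiv_def refl_on_def by (auto simp: sym_def trans_def intro: rtrancl_trans)
qed

lemma symcl_rtrancl_map: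
  assumes "\<And>a b. (a, b) \<in> R \<Longrightarrow> (f a, f b) \<in> S"
    and "(a, b) \<in> (R \<union> R\<inverse>)\<^sup>*"
  shows "(f a, f b) \<in> (S \<union> S\<inverse>)\<^sup>*"
  using assms(2)
proof (induction rule: rtrancl_induct)
  case (step y z)
  then have "(f y, f z) \<in> S \<union> S\<inverse>"
    using assms(1) by blast
  with step.IH show ?case
    by (rule rtrancl_into_rtrancl)
qed simp

lemma equiv_lanV: "equiv (lanV_el F X) (lanV_rel F X)"
  unfolding lanV_rel_def by (rule equiv_symcl_restrict)

lemma equiv_lanE: "equiv (lanE_el F X) (lanE_rel F X)"
  unfolding lanE_rel_def by (rule equiv_symcl_restrict)

lemma rep_in_class: "equiv A r \<Longrightarrow> c \<in> A // r \<Longrightarrow> rep c \<in> c"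
  unfolding rep_def by (metis in_quotient_imp_non_empty ex_in_conv someI_ex)

lemma rep_in_carrier: "equiv A r \<Longrightarrow> c \<in> A // r \<Longrightarrow> rep c \<in> A"
  using rep_in_class in_quotient_imp_subset by blast

lemma rel_rep_class: "equiv A r \<Longrightarrow> x \<in> A \<Longrightarrow> (x, rep (r `` {x})) \<in> r"
  using rep_in_class[of A r "r `` {x}"] by (simp add: quotientI)

lemma plen_subpath: "k + m \<le> plen p \<Longrightarrow> plen (subpath k m p) = m"
  unfolding plen_def subpath_def by simp

lemma is_path_subpath: "is_path X p \<Longrightarrow> k + m \<le> plen p \<Longrightarrow> is_path X (subpath k m p)"
  unfolding is_path_def subpath_def plen_def by (auto dest: in_set_takeD in_set_dropD)

lemma lanV_class_subpath:
  assumes F: "d0_functor F" and p: "is_path X p" and km: "k + m \<le> plen p"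
    and v: "v \<in> gV (fst F m)"
  shows "lanV_rel F X `` {(subpath k m p, v)} = lanV_rel F X `` {(p, fst (snd F m (plen p) k) v)}"
proof -
  have "graph_hom (fst F m) (fst F (plen p)) (snd F m (plen p) k)"
    using F km unfolding d0_functor_def by blast
  then have "(p, fst (snd F m (plen p) k) v) \<in> lanV_el F X"
    using p v unfolding lanV_el_def graph_hom_def by blast
  moreover have "(subpath k m p, v) \<in> lanV_el F X"
    using is_path_subpath[OF p km] plen_subpath[OF km] v unfolding lanV_el_def by simp
  moreover have "((subpath k m p, v), (p, fst (snd F m (plen p) k) v)) \<in> lanV_gen F X"
    using p km v unfolding lanV_gen_def by blast
  ultimately have "((subpath k m p, v), (p, fst (snd F m (plen p) k) v)) \<in> lanV_rel F X"
    unfolding lanV_rel_def by blast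
  then show ?thesis
    using equiv_class_eq[OF equiv_lanV] by blast
qed

definition lan_end ::
    "(('v, 'e) graph \<Rightarrow> 'e \<Rightarrow> 'v) \<Rightarrow> ('v, 'e) d0fun \<Rightarrow> ('x, 'y) path \<times> 'e \<Rightarrow> ('x, 'y) path \<times> 'v" where
  "lan_end sel F a = (fst a, sel (fst F (plen (fst a))) (snd a))"

lemma src_lan_obj: "src (lan_obj F X) c = lanV_rel F X `` {lan_end src F (rep c)}"
  by (simp add: lan_obj_def lan_end_def)

lemma tgt_lan_obj: "tgt (lan_obj F X) c = lanV_rel F X `` {lan_end tgt F (rep c)}"
  by (simp add: lan_obj_def lan_end_def)

lemma lan_end_el:
  assumes "d0_functor F" and "sel \<in> {src, tgt}" and "x \<in> lanE_el F X"
  shows "lan_end sel F x \<in> lanV_el F X"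
proof -
  have "wf_graph (fst F (plen (fst x)))"
    using assms(1) unfolding d0_functor_def by blast
  then show ?thesis
    using assms(2,3) unfolding lanE_el_def lanV_el_def lan_end_def wf_graph_def by auto
qed

lemma lan_end_gen:
  assumes F: "d0_functor F" and sel: "sel \<in> {src, tgt}" and ab: "(a, b) \<in> lanE_gen F X"
  shows "(lan_end sel F a, lan_end sel F b) \<in> lanV_gen F X"
proof -
  from ab obtain p k m e where a: "a = (subpath k m p, e)" and b: "b = (p, snd (snd F m (plen p) k) e)"
    and p: "is_path X p" and km: "k + m \<le> plen p" and e: "e \<in> gE (fst F m)"
    unfolding lanE_gen_def by blast
  have "graph_hom (fst F m) (fst F (plen p)) (snd F m (plen p) k)" and "wf_graph (fst F m)"
    using F km unfolding d0_functor_def by blast+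
  then have "sel (fst F (plen p)) (snd (snd F m (plen p) k) e) =
      fst (snd F m (plen p) k) (sel (fst F m) e)"
    and "sel (fst F m) e \<in> gV (fst F m)"
    using sel e unfolding graph_hom_def wf_graph_def by auto
  moreover have "((subpath k m p, sel (fst F m) e), (p, fst (snd F m (plen p) k) (sel (fst F m) e)))
      \<in> lanV_gen F X"
    using p km \<open>sel (fst F m) e \<in> gV (fst F m)\<close> unfolding lanV_gen_def by blast
  ultimately show ?thesis
    unfolding a b lan_end_def by (simp add: plen_subpath[OF km])
qed

text \<open>Source and target in lan_obj do not depend on the chosen representative.\<close>
lemma lan_end_rep_class:
  assumes F: "d0_functor F" and sel: "sel \<in> {src, tgt}" and x: "x \<in> lanE_el F X"
  shows "lanV_rel F X `` {lan_end sel F (rep (lanE_rel F X `` {x}))} =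
    lanV_rel F X `` {lan_end sel F x}"
proof -
  let ?r = "rep (lanE_rel F X `` {x})"
  have "(x, ?r) \<in> lanE_rel F X"
    by (rule rel_rep_class[OF equiv_lanE x])
  then have r: "(x, ?r) \<in> (lanE_gen F X \<union> (lanE_gen F X)\<inverse>)\<^sup>*" "?r \<in> lanE_el F X"
    unfolding lanE_rel_def by auto
  have "(lan_end sel F x, lan_end sel F ?r) \<in> (lanV_gen F X \<union> (lanV_gen F X)\<inverse>)\<^sup>*"
    using symcl_rtrancl_map[OF lan_end_gen[OF F sel] r(1)] .
  then have "(lan_end sel F x, lan_end sel F ?r) \<in> lanV_rel F X"
    unfolding lanV_rel_def using lan_end_el[OF F sel] x r(2) by blast
  then show ?thesis
    using equiv_class_eq[OF equiv_lanV] by (metis sym)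
qed

lemma src_lan_obj_class:
  "d0_functor F \<Longrightarrow> x \<in> lanE_el F X \<Longrightarrow>
   src (lan_obj F X) (lanE_rel F X `` {x}) = lanV_rel F X `` {lan_end src F x}"
  unfolding src_lan_obj by (rule lan_end_rep_class) auto

lemma tgt_lan_obj_class:
  "d0_functor F \<Longrightarrow> x \<in> lanE_el F X \<Longrightarrow>
   tgt (lan_obj F X) (lanE_rel F X `` {x}) = lanV_rel F X `` {lan_end tgt F x}"
  unfolding tgt_lan_obj by (rule lan_end_rep_class) auto

lemma potential_path_length:
  fixes \<phi> :: "'v \<Rightarrow> nat"
  assumes incr: "\<And>e. e \<in> gE G \<Longrightarrow> \<phi> (src G e) < \<phi> (tgt G e)"
    and bound: "\<And>v. v \<in> gV G \<Longrightarrow> \<phi> v \<le> B"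
    and p: "is_path G p"
  shows "plen p \<le> B"
proof -
  have "i \<le> \<phi> (fst p ! i)" if "i \<le> plen p" for i
    using that
  proof (induction i)
    case (Suc i)
    then have "snd p ! i \<in> gE G" "src G (snd p ! i) = fst p ! i" "tgt G (snd p ! i) = fst p ! Suc i"
      using p unfolding is_path_def plen_def by auto
    with Suc show ?case
      using incr by fastforce
  qed simp
  moreover have "fst p ! plen p \<in> gV G"
    using p unfolding is_path_def plen_def by auto
  ultimately show ?thesis
    using bound le_trans by blast
qed

lemma lan_obj_potential_path_length:
  fixes h :: "('x, 'y) path \<times> 'v \<Rightarrow> nat"
  assumes F: "d0_functor F"
    and inv: "\<And>a b. (a, b) \<in> lanV_gen F X \<Longrightarrow> h a = h b"
    and incr: "\<And>y. y \<in> lanE_el F X \<Longrightarrow> h (lan_end src F y) < h (lan_end tgt F y)"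
    and bound: "\<And>x. x \<in> lanV_el F X \<Longrightarrow> h x \<le> B"
    and p: "is_path (lan_obj F X) p"
  shows "plen p \<le> B"
proof (rule potential_path_length[where \<phi> = "h \<circ> rep", OF _ _ p])
  have rep_class: "h (rep (lanV_rel F X `` {x})) = h x" if "x \<in> lanV_el F X" for x
  proof -
    have "(x, rep (lanV_rel F X `` {x})) \<in> (lanV_gen F X \<union> (lanV_gen F X)\<inverse>)\<^sup>*"
      using rel_rep_class[OF equiv_lanV that] unfolding lanV_rel_def by blast
    then have "(h x, h (rep (lanV_rel F X `` {x}))) \<in> (Id \<union> Id\<inverse>)\<^sup>*"
      by (rule symcl_rtrancl_map[rotated]) (simp add: inv)
    then show ?thesis
      by simp
  qed
  fix c assume "c \<in> gE (lan_obj F X)"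
  then have y: "rep c \<in> lanE_el F X"
    using rep_in_carrier[OF equiv_lanE] by (simp add: lan_obj_def)
  show "(h \<circ> rep) (src (lan_obj F X) c) < (h \<circ> rep) (tgt (lan_obj F X) c)"
    unfolding src_lan_obj tgt_lan_obj comp_def
    using incr[OF y] rep_class lan_end_el[OF F _ y] by simp
next
  fix c assume "c \<in> gV (lan_obj F X)"
  then have "rep c \<in> lanV_el F X"
    using rep_in_carrier[OF equiv_lanV] by (simp add: lan_obj_def)
  then show "(h \<circ> rep) c \<le> B"
    using bound by simp
qed


text \<open>F1[m] triples every vertex j of [m] into 3j, 3j+1, 3j+2 and every edge j \<rightarrow> j+1
  into 3j \<rightarrow> 3j+4, 3j+1 \<rightarrow> 3j+5 and 3j+5 \<rightarrow> 3j.\<close>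
definition F1 :: "(nat, nat) d0fun" where
  "F1 = ((\<lambda>m. \<lparr>gV = {..<3 * (m + 1)}, gE = {..<3 * m},
                src = (\<lambda>e. if e mod 3 = 2 then e + 3 else e),
                tgt = (\<lambda>e. if e mod 3 = 2 then e - 2 else e + 4)\<rparr>),
         (\<lambda>m n k. ((\<lambda>v. v + 3 * k), (\<lambda>e. e + 3 * k))))"

definition F2 :: "(nat, nat) d0fun" where
  "F2 = ((\<lambda>m. if 12 \<le> m then \<lparr>gV = {0}, gE = {0}, src = (\<lambda>_. 0), tgt = (\<lambda>_. 0)\<rparr>
               else \<lparr>gV = {}, gE = {}, src = (\<lambda>_. 0), tgt = (\<lambda>_. 0)\<rparr>),
         (\<lambda>m n k. (id, id)))"

lemma d0_functor_F1: "d0_functor F1"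
  unfolding d0_functor_def F1_def wf_graph_def graph_hom_def
  by (auto simp: mod_add_left_eq; presburger)

lemma d0_functor_F2: "d0_functor F2"
  unfolding d0_functor_def F2_def wf_graph_def graph_hom_def by auto

lemma lin_path_vertex:
  assumes p: "is_path (lin n) p" and i: "i \<le> plen p"
  shows "fst p ! i = fst p ! 0 + i \<and> fst p ! i \<le> n"
  using i
proof (induction i)
  case 0
  have "fst p ! 0 \<in> set (fst p)" and "set (fst p) \<subseteq> {0..n}"
    using p unfolding is_path_def lin_def by simp_all
  then show ?case
    by auto
next
  case (Suc i)
  then have "i < length (snd p)"
    unfolding plen_def by simp
  moreover have "fst p ! Suc i \<in> set (fst p)"
    using p calculation unfolding is_path_def by simp
  ultimately show ?case
    using p Suc unfolding is_path_def lin_def by auto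
qed

text \<open>The vertex v of F1[m] sitting over a path [m] \<rightarrow> [n] starting at s lies over the vertex
  s + v div 3 of [n]; the offsets 4, 2, 0 make every edge of F1[m] raise the height by one.\<close>
definition F1_height :: "(nat, nat) path \<times> nat \<Rightarrow> nat" where
  "F1_height x = 3 * (fst (fst x) ! 0 + snd x div 3) +
     (if snd x mod 3 = 0 then 4 else if snd x mod 3 = 1 then 2 else 0)"

lemma F1_height_gen:
  assumes "(a, b) \<in> lanV_gen F1 (lin n)"
  shows "F1_height a = F1_height b"
proof -
  from assms obtain p k m v where a: "a = (subpath k m p, v)" and b: "b = (p, v + 3 * k)"
    and p: "is_path (lin n) p" and km: "k + m \<le> plen p"
    unfolding lanV_gen_def F1_def by auto
  have "k < length (fst p)"
    using p km unfolding is_path_def plen_def by simp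
  then have "fst (subpath k m p) ! 0 = fst p ! 0 + k"
    using lin_path_vertex[OF p, of k] km unfolding subpath_def by simp
  then show ?thesis
    unfolding a b F1_height_def by simp
qed

lemma F1_height_lan_end: "F1_height (lan_end tgt F1 y) = F1_height (lan_end src F1 y) + 1"
proof -
  obtain q i r where y: "y = (q, 3 * i + r)" and "r < 3"
    by (metis prod.collapse div_mod_decomp mult.commute mod_less_divisor zero_less_numeral)
  then have "r = 0 \<or> r = 1 \<or> r = 2"
    by linarith
  then show ?thesis
    unfolding y F1_height_def lan_end_def F1_def by (elim disjE; simp; presburger)
qed

lemma F1_height_bound:
  assumes "x \<in> lanV_el F1 (lin n)"
  shows "F1_height x \<le> 3 * n + 4"
proof -
  obtain q v where x: "x = (q, v)" and q: "is_path (lin n) q" and v: "v < 3 * (plen q + 1)"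
    using assms unfolding lanV_el_def F1_def by auto
  have "fst q ! 0 + plen q \<le> n"
    using lin_path_vertex[OF q, of "plen q"] by simp
  moreover have "v div 3 \<le> plen q"
    using v by simp
  ultimately show ?thesis
    unfolding x F1_height_def by simp
qed

lemma lan_F1_lin_path_length: "is_path (lan_obj F1 (lin n)) p \<Longrightarrow> plen p \<le> 3 * n + 4"
  by (rule lan_obj_potential_path_length[OF d0_functor_F1 F1_height_gen _ F1_height_bound])
    (simp_all add: F1_height_lan_end)

lemma lan_F2_edges_empty_iff: "gE (lan_obj F2 Y) = {} \<longleftrightarrow> (\<forall>p. is_path Y p \<longrightarrow> plen p < 12)"
proof -
  have "lanE_el F2 Y = {(p, 0) | p. is_path Y p \<and> 12 \<le> plen p}"
    unfolding lanE_el_def F2_def by (auto split: if_splits)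
  then show ?thesis
    unfolding lan_obj_def by (auto simp: not_less) (meson leD)
qed

lemma comp_res_edges_empty:
  assumes "n \<le> 2"
  shows "gE (fst (comp_res F2 F1) n) = {}"
proof -
  have "\<forall>p. is_path (lan_obj F1 (lin n)) p \<longrightarrow> plen p < 12"
    using lan_F1_lin_path_length[of n] assms by fastforce
  then show ?thesis
    unfolding comp_res_def fst_conv lan_F2_edges_empty_iff .
qed

definition triangle :: "(nat, nat) graph" where
  "triangle = \<lparr>gV = {0, 1, 2}, gE = {0, 1, 2},
                src = (\<lambda>e. if e = 1 then 1 else 0), tgt = (\<lambda>e. if e = 0 then 1 else 2)\<rparr>"

lemma wf_triangle: "wf_graph triangle"
  unfolding wf_graph_def triangle_def by auto

lemma triangle_path_length: "is_path triangle p \<Longrightarrow> plen p \<le> 2"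
  by (rule potential_path_length[where \<phi> = id]) (auto simp: triangle_def)

lemma lan_comp_res_triangle_edges_empty: "gE (lan_obj (comp_res F2 F1) triangle) = {}"
proof -
  have "lanE_el (comp_res F2 F1) triangle = {}"
    unfolding lanE_el_def using triangle_path_length comp_res_edges_empty by auto
  then show ?thesis
    by (simp add: lan_obj_def)
qed

definition closed_walk :: "('v, 'e) graph \<Rightarrow> nat \<Rightarrow> (nat \<Rightarrow> 'v) \<Rightarrow> (nat \<Rightarrow> 'e) \<Rightarrow> bool" where
  "closed_walk G k vs es \<longleftrightarrow> 0 < k \<and>
     (\<forall>i<k. vs i \<in> gV G \<and> es i \<in> gE G \<and> src G (es i) = vs i \<and> tgt G (es i) = vs (Suc i mod k))"

lemma closed_walk_path:
  assumes "closed_walk G k vs es"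
  shows "is_path G (map (\<lambda>i. vs (i mod k)) [0..<Suc n], map (\<lambda>i. es (i mod k)) [0..<n])"
  using assms unfolding closed_walk_def is_path_def by (auto simp: mod_Suc_eq simp del: upt_Suc)

lemma lan_F1_triangle_closed_walk:
  "closed_walk (lan_obj F1 triangle) 3
     (\<lambda>i. lanV_rel F1 triangle `` {(([i], []), i)})
     (\<lambda>i. lanE_rel F1 triangle `` {(([src triangle i, tgt triangle i], [i]), i)})"
proof -
  let ?G = "lan_obj F1 triangle"
  let ?V = "\<lambda>x v. lanV_rel F1 triangle `` {(x, v)}"
  let ?q = "\<lambda>e. ([src triangle e, tgt triangle e], [e])"
  have q: "is_path triangle (?q e)" if "e < 3" for e
    using that unfolding is_path_def triangle_def by (auto simp: less_Suc_eq)
  have src_class: "?V (?q e) v = ?V ([src triangle e], []) v" if "e < 3" "v < 3" for e v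
    using lanV_class_subpath[OF d0_functor_F1 q[OF that(1)], of 0 0 v] that
    by (simp add: F1_def subpath_def plen_def)
  have tgt_class: "?V (?q e) (v + 3) = ?V ([tgt triangle e], []) v" if "e < 3" "v < 3" for e v
    using lanV_class_subpath[OF d0_functor_F1 q[OF that(1)], of 1 0 v] that
    by (simp add: F1_def subpath_def plen_def)
  have F1_ends: "src (fst F1 m) e = (if e mod 3 = 2 then e + 3 else e)"
    "tgt (fst F1 m) e = (if e mod 3 = 2 then e - 2 else e + 4)" for m e
    by (simp_all add: F1_def)
  have triangle_ends: "src triangle e = (if e = 1 then 1 else 0)"
    "tgt triangle e = (if e = 0 then 1 else 2)" for e
    by (simp_all add: triangle_def)
  show ?thesis
    unfolding closed_walk_def
  proof (intro conjI allI impI)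
    fix i :: nat
    assume i: "i < 3"
    then have i012: "i = 0 \<or> i = 1 \<or> i = 2"
      by linarith
    have x: "(?q i, i) \<in> lanE_el F1 triangle"
      using q[OF i] i unfolding lanE_el_def by (simp add: F1_def plen_def)
    have "(([i], []), i) \<in> lanV_el F1 triangle"
      using i unfolding lanV_el_def is_path_def triangle_def by (auto simp: F1_def plen_def)
    then show "?V ([i], []) i \<in> gV ?G"
      unfolding lan_obj_def by (simp add: quotientI)
    show "lanE_rel F1 triangle `` {(?q i, i)} \<in> gE ?G"
      using x unfolding lan_obj_def by (simp add: quotientI)
    have "src ?G (lanE_rel F1 triangle `` {(?q i, i)}) = ?V (?q i) (src (fst F1 1) i)"
      unfolding src_lan_obj_class[OF d0_functor_F1 x]
      by (simp add: lan_end_def plen_def)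
    also have "\<dots> = ?V ([i], []) i"
      using i012 src_class[of i i] tgt_class[of 2 2]
      by (elim disjE; simp add: F1_ends triangle_ends)
    finally show "src ?G (lanE_rel F1 triangle `` {(?q i, i)}) = ?V ([i], []) i" .
    have "tgt ?G (lanE_rel F1 triangle `` {(?q i, i)}) = ?V (?q i) (tgt (fst F1 1) i)"
      unfolding tgt_lan_obj_class[OF d0_functor_F1 x]
      by (simp add: lan_end_def plen_def)
    also have "\<dots> = ?V ([Suc i mod 3], []) (Suc i mod 3)"
      using i012 tgt_class[of 0 1] tgt_class[of 1 2] src_class[of 2 0]
      by (elim disjE; simp add: F1_ends triangle_ends numeral_2_eq_2)
    finally show "tgt ?G (lanE_rel F1 triangle `` {(?q i, i)}) =
        ?V ([Suc i mod 3], []) (Suc i mod 3)" .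
  qed simp
qed

lemma lan_comp_triangle_edges_nonempty: "gE (lan_obj F2 (lan_obj F1 triangle)) \<noteq> {}"
  using closed_walk_path[OF lan_F1_triangle_closed_walk, of 12]
  unfolding lan_F2_edges_empty_iff by (fastforce simp: plen_def)

theorem corollary7p5:
  shows "\<exists>(F1 :: (nat, nat) d0fun) (F2 :: (nat, nat) d0fun).
           d0_functor F1 \<and> d0_functor F2 \<and>
           \<not> (\<forall>X :: (nat, nat) graph. wf_graph X \<longrightarrow> comp_induced_at F2 F1 X)"
proof (intro exI conjI)
  show "d0_functor F1" "d0_functor F2"
    by (fact d0_functor_F1 d0_functor_F2)+
  have "\<not> bij_betw (snd (comparison F2 F1 triangle))
          (gE (lan_obj (comp_res F2 F1) triangle)) (gE (lan_obj F2 (lan_obj F1 triangle)))"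
    using lan_comp_res_triangle_edges_empty lan_comp_triangle_edges_nonempty
    by (simp add: bij_betw_def)
  then show "\<not> (\<forall>X :: (nat, nat) graph. wf_graph X \<longrightarrow> comp_induced_at F2 F1 X)"
    using wf_triangle unfolding comp_induced_at_def by blast
qed

end
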